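(* Let $r\ge 2$ and let $G$ be an $r$-regular graph of order $n$ with $\mathrm{LIP}(G)=k$. Then $k\le \frac{rn-2}{2r-2}$.
   Context: All graphs are finite and simple. For a graph $G$, $\mathrm{LIP}(G)$ denotes the number of vertices of a longest induced path in $G$. The order of a graph is its number of vertices. *)

theory Defs
  imports Complex_Main
begin

definition simple_graph :: "'a set \<Rightarrow> ('a \<Rightarrow> 'a \<Rightarrow> bool) \<Rightarrow> bool" where
  "simple_graph V E \<longleftrightarrow> finite V \<and> (\<forall>u v. E u v \<longrightarrow> u \<in> V \<and> v \<in> V)
     \<and> (\<forall>v. \<not> E v v) \<and> (\<forall>u v. E u v \<longrightarrow> E v u)"

definition degree :: "'a set \<Rightarrow> ('a \<Rightarrow> 'a \<Rightarrow> bool) \<Rightarrow> 'a \<Rightarrow> nat" where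
  "degree V E v = card {u \<in> V. E v u}"

definition regular :: "'a set \<Rightarrow> ('a \<Rightarrow> 'a \<Rightarrow> bool) \<Rightarrow> nat \<Rightarrow> bool" where
  "regular V E r \<longleftrightarrow> (\<forall>v\<in>V. degree V E v = r)"

definition induced_path :: "'a set \<Rightarrow> ('a \<Rightarrow> 'a \<Rightarrow> bool) \<Rightarrow> 'a list \<Rightarrow> bool" where
  "induced_path V E p \<longleftrightarrow> p \<noteq> [] \<and> distinct p \<and> set p \<subseteq> V
     \<and> (\<forall>i j. i < length p \<and> j < length p \<longrightarrow>
            (E (p ! i) (p ! j) \<longleftrightarrow> (i + 1 = j \<or> j + 1 = i)))"

(* Number of vertices of a longest induced path. *)
definition LIP :: "'a set \<Rightarrow> ('a \<Rightarrow> 'a \<Rightarrow> bool) \<Rightarrow> nat" where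
  "LIP V E = Max {length p | p. induced_path V E p}"

end

theory Submission
  imports Defs
begin

text \<open>Double counting the arcs leaving the vertex set \<open>S\<close> of a longest induced path: in an
\<open>r\<close>-regular graph there are exactly \<open>r k\<close> of them. At most \<open>2(k - 1)\<close> stay inside \<open>S\<close>, because
\<open>S\<close> induces a path, and at most \<open>r (n - k)\<close> end outside \<open>S\<close>, because every outside vertex has
only \<open>r\<close> neighbours. Hence \<open>r k \<le> 2 (k - 1) + r (n - k)\<close>, which rearranges to the bound.\<close>

lemma simple_graph_finite: "simple_graph V E \<Longrightarrow> finite V"
  unfolding simple_graph_def by blast

lemma card_arcs_from_regular:
  assumes "simple_graph V E" and "regular V E r" and "S \<subseteq> V"
  shows "card (SIGMA u:S. {v\<in>V. E u v}) = r * card S"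
proof -
  have "finite S" using assms(1,3) simple_graph_finite finite_subset by blast
  then have "card (SIGMA u:S. {v\<in>V. E u v}) = (\<Sum>u\<in>S. card {v\<in>V. E u v})"
    using simple_graph_finite[OF assms(1)] by (intro card_SigmaI) auto
  also have "\<dots> = (\<Sum>u\<in>S. r)"
    using assms(2,3) unfolding regular_def degree_def by (intro sum.cong) auto
  finally show ?thesis by simp
qed

lemma card_arcs_into_le:
  assumes "simple_graph V E" and "regular V E r" and "T \<subseteq> V"
  shows "card (SIGMA u:S. {v\<in>T. E u v}) \<le> r * card T"
proof -
  have "finite V" using assms(1) by (rule simple_graph_finite)
  then have fin: "finite (SIGMA v:T. {u\<in>V. E v u})"
    using assms(3) finite_subset by (intro finite_SigmaI) auto
  have "(SIGMA u:S. {v\<in>T. E u v}) \<subseteq> prod.swap ` (SIGMA v:T. {u\<in>V. E v u})"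
    using assms(1) by (auto simp: simple_graph_def image_iff)
  then have "card (SIGMA u:S. {v\<in>T. E u v}) \<le> card (prod.swap ` (SIGMA v:T. {u\<in>V. E v u}))"
    using fin by (intro card_mono) auto
  also have "\<dots> = r * card T"
    using card_arcs_from_regular[OF assms] by (simp add: card_image)
  finally show ?thesis .
qed

lemma regular_card_le_inner_arcs_plus_outside:
  assumes "simple_graph V E" and "regular V E r" and "S \<subseteq> V"
  shows "r * card S \<le> card (SIGMA u:S. {v\<in>S. E u v}) + r * card (V - S)"
proof -
  have "r * card S = card (SIGMA u:S. {v\<in>V. E u v})"
    using card_arcs_from_regular[OF assms] by simp
  also have "(SIGMA u:S. {v\<in>V. E u v}) = (SIGMA u:S. {v\<in>S. E u v}) \<union> (SIGMA u:S. {v\<in>V - S. E u v})"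
    using assms(3) by auto
  also have "card \<dots> \<le> card (SIGMA u:S. {v\<in>S. E u v}) + card (SIGMA u:S. {v\<in>V - S. E u v})"
    by (rule card_Un_le)
  finally have "r * card S \<le> card (SIGMA u:S. {v\<in>S. E u v}) + card (SIGMA u:S. {v\<in>V - S. E u v})" .
  then show ?thesis
    using card_arcs_into_le[OF assms(1,2), of "V - S" S] by simp
qed

lemma induced_path_card_inner_arcs:
  assumes "induced_path V E p"
  shows "card (SIGMA u:set p. {v\<in>set p. E u v}) \<le> 2 * (length p - 1)"
proof -
  define forward where "forward = (\<lambda>i. (p ! i, p ! Suc i)) ` {..<length p - 1}"
  have "(SIGMA u:set p. {v\<in>set p. E u v}) \<subseteq> forward \<union> prod.swap ` forward"
  proof safe
    fix u v assume "u \<in> set p" "v \<in> set p" "E u v" "(u, v) \<notin> prod.swap ` forward"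
    then obtain i j where "i < length p" "j < length p" "u = p ! i" "v = p ! j" "E (p ! i) (p ! j)"
      by (metis in_set_conv_nth)
    moreover from this have "Suc i = j \<or> Suc j = i"
      using assms unfolding induced_path_def by simp
    ultimately show "(u, v) \<in> forward"
      using \<open>(u, v) \<notin> prod.swap ` forward\<close> unfolding forward_def by (force simp: image_iff)
  qed
  then have "card (SIGMA u:set p. {v\<in>set p. E u v}) \<le> card (forward \<union> prod.swap ` forward)"
    unfolding forward_def by (intro card_mono) auto
  also have "\<dots> \<le> card forward + card (prod.swap ` forward)"
    by (rule card_Un_le)
  also have "\<dots> \<le> 2 * (length p - 1)"
    using card_image_le[of "{..<length p - 1}" "\<lambda>i. (p ! i, p ! Suc i)"]
    unfolding forward_def by (simp add: card_image)
  finally show ?thesis .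
qed

lemma induced_path_length_le_card:
  "simple_graph V E \<Longrightarrow> induced_path V E p \<Longrightarrow> length p \<le> card V"
  unfolding induced_path_def by (metis card_mono distinct_card simple_graph_finite)

lemma regular_induced_path_length_bound:
  assumes "simple_graph V E" and "regular V E r" and "induced_path V E p"
  shows "r * length p \<le> 2 * (length p - 1) + r * (card V - length p)"
proof -
  have "set p \<subseteq> V" and "card (set p) = length p"
    using assms(3) unfolding induced_path_def by (auto simp: distinct_card)
  moreover from this have "card (V - set p) = card V - length p"
    using simple_graph_finite[OF assms(1)] by (simp add: card_Diff_subset finite_subset)
  ultimately show ?thesis
    using regular_card_le_inner_arcs_plus_outside[OF assms(1,2), of "set p"]
      induced_path_card_inner_arcs[OF assms(3)] by simp
qed

lemma LIP_attained:
  assumes "simple_graph V E" and "V \<noteq> {}"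
  obtains p where "induced_path V E p" and "length p = LIP V E"
proof -
  let ?L = "{length p | p. induced_path V E p}"
  have "?L \<subseteq> {..card V}"
    using induced_path_length_le_card[OF assms(1)] by auto
  then have "finite ?L"
    using finite_subset by blast
  moreover obtain v where "v \<in> V" using assms(2) by blast
  then have "induced_path V E [v]"
    using assms(1) unfolding induced_path_def simple_graph_def by auto
  then have "?L \<noteq> {}" by blast
  ultimately have "LIP V E \<in> ?L"
    unfolding LIP_def by (rule Max_in)
  then show ?thesis using that by auto
qed

theorem corollary1:
  fixes V :: "'a set" and E :: "'a \<Rightarrow> 'a \<Rightarrow> bool" and r n k :: nat
  assumes "simple_graph V E" and "V \<noteq> {}"
    and "r \<ge> 2" and "regular V E r"
    and "card V = n" and "LIP V E = k"
  shows "real k \<le> (real r * real n - 2) / (2 * real r - 2)"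
proof -
  obtain p where p: "induced_path V E p" "length p = k"
    using LIP_attained[OF assms(1,2)] assms(6) by metis
  have "1 \<le> k" using p unfolding induced_path_def by (auto simp: Suc_le_eq)
  moreover have "k \<le> n" using induced_path_length_le_card[OF assms(1) p(1)] p(2) assms(5) by simp
  moreover have "real (r * k) \<le> real (2 * (k - 1) + r * (n - k))"
    using regular_induced_path_length_bound[OF assms(1,4) p(1)] p(2) assms(5)
    by (simp only: of_nat_le_iff)
  ultimately have "real r * real k \<le> 2 * (real k - 1) + real r * (real n - real k)"
    by (simp add: of_nat_diff)
  then have "real k * (2 * real r - 2) \<le> real r * real n - 2"
    by (simp add: algebra_simps)
  then show ?thesis
    using assms(3) by (simp add: pos_le_divide_eq)
qed

end
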